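(* Let $F$ be a field of characteristic not 2 or 3, $E$ an étale cubic $F$-algebra, and suppose $(Q,\beta)$ defines an $E$-twisted composition algebra structure on $C=E^2$ such that the standard basis $\{e_1,e_2\}$ is reduced, i.e. $\beta(e_1)=e_2$. Then $(Q,\beta)=\tilde\phi(v)$ for the reduced cube $v=(1,0,-Q(e_1),-N_C(e_1))$, and $\Delta_E(v)=\Delta_C(e_1)$.
   Context: Notation: $x^\#$ adjoint ($xx^\#=N_E(x)$), $x\times y=(x+y)^\#-x^\#-y^\#$. An $E$-twisted composition algebra structure on $E^2$ is $(Q,\beta)$ with $Q:E^2\to E$ nondegenerate quadratic, polar $b_Q$, $\beta$ quadratic with $\beta(av)=a^\#\beta(v)$, $Q(\beta(v))=Q(v)^\#$, $N_C(v):=b_Q(v,\beta(v))\in F$. $\Delta_C(v)=N_C(v)^2-4N_E(Q(v))$. For a cube $(a,e,f,b)\in F\oplus E\oplus E\oplus F$, $\tilde\phi(a,e,f,b)=(Q,\beta)$ with $Q(x,y)=(e^\#-af)x^2+(-ab-2ef+\mathrm{Tr}_E(ef))xy+(f^\#-be)y^2$ and $\beta(x,y)=(-ex^\#-by^\#-(fx)\times y,\ ax^\#+fy^\#+(ey)\times x)$; for a reduced cube $(1,0,f,b)$ this is $Q(x,y)=-fx^2-bxy+f^\#y^2$, $\beta(x,y)=(-by^\#-(fx)\times y,\ x^\#+fy^\#)$. $\Delta_E(a,e,f,b)=a^2b^2-2ab\mathrm{Tr}_E(ef)+\mathrm{Tr}_E(e^2f^2)+4aN_E(f)+4bN_E(e)-2\mathrm{Tr}_E(e^\#f^\#)$,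 so $\Delta_E(1,0,f,b)=b^2+4N_E(f)$. *)

theory Defs
  imports "HOL-Analysis.Analysis"
begin

text \<open>The F-algebra structure of E is given by the structure map emb : F -> E
 (a unital ring homomorphism); scalar multiplication is c.x = emb c * x.\<close>

definition is_basis3 :: "('f::field \<Rightarrow> 'e::comm_ring_1) \<Rightarrow> (3 \<Rightarrow> 'e) \<Rightarrow> bool" where
  "is_basis3 emb b \<longleftrightarrow> (\<forall>x. \<exists>!c::'f^3. x = (\<Sum>i\<in>UNIV. emb (c$i) * b i))"

definition F_algebra :: "('f::field \<Rightarrow> 'e::comm_ring_1) \<Rightarrow> bool" where
  "F_algebra emb \<longleftrightarrow> emb 1 = 1 \<and> (\<forall>a b. emb (a + b) = emb a + emb b)
     \<and> (\<forall>a b. emb (a * b) = emb a * emb b)"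

definition cubic_algebra :: "('f::field \<Rightarrow> 'e::comm_ring_1) \<Rightarrow> bool" where
  "cubic_algebra emb \<longleftrightarrow> F_algebra emb \<and> (\<exists>b. is_basis3 emb b)"

definition coords :: "('f::field \<Rightarrow> 'e::comm_ring_1) \<Rightarrow> (3 \<Rightarrow> 'e) \<Rightarrow> 'e \<Rightarrow> 'f^3" where
  "coords emb b x = (THE c. x = (\<Sum>i\<in>UNIV. emb (c$i) * b i))"

definition ebasis :: "('f::field \<Rightarrow> 'e::comm_ring_1) \<Rightarrow> (3 \<Rightarrow> 'e)" where
  "ebasis emb = (SOME b. is_basis3 emb b)"

definition lmat :: "('f::field \<Rightarrow> 'e::comm_ring_1) \<Rightarrow> 'e \<Rightarrow> 'f^3^3" where
  "lmat emb x = (\<chi> i j. coords emb (ebasis emb) (x * ebasis emb j) $ i)"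

definition N_E :: "('f::field \<Rightarrow> 'e::comm_ring_1) \<Rightarrow> 'e \<Rightarrow> 'f" where
  "N_E emb x = det (lmat emb x)"

definition Tr_E :: "('f::field \<Rightarrow> 'e::comm_ring_1) \<Rightarrow> 'e \<Rightarrow> 'f" where
  "Tr_E emb x = trace (lmat emb x)"

text \<open>Quadratic trace: sum of principal 2x2 minors, i.e. the middle coefficient
 of the characteristic polynomial  t^3 - Tr t^2 + S t - N.\<close>
definition S_E :: "('f::field \<Rightarrow> 'e::comm_ring_1) \<Rightarrow> 'e \<Rightarrow> 'f" where
  "S_E emb x = (\<Sum>(i,j)\<in>{(i,j). i < (j::3)}.
      lmat emb x $ i $ i * lmat emb x $ j $ j - lmat emb x $ i $ j * lmat emb x $ j $ i)"

text \<open>The adjoint x^# = x^2 - Tr(x) x + S(x), so that x x^# = N(x).\<close>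
definition adj :: "('f::field \<Rightarrow> 'e::comm_ring_1) \<Rightarrow> 'e \<Rightarrow> 'e" where
  "adj emb x = x * x - emb (Tr_E emb x) * x + emb (S_E emb x)"

definition cross :: "('f::field \<Rightarrow> 'e::comm_ring_1) \<Rightarrow> 'e \<Rightarrow> 'e \<Rightarrow> 'e" where
  "cross emb x y = adj emb (x + y) - adj emb x - adj emb y"

text \<open>Etale: a cubic algebra whose trace form is nondegenerate
 (equivalent to etale for finite-dimensional commutative algebras over a field).\<close>
definition etale_cubic :: "('f::field \<Rightarrow> 'e::comm_ring_1) \<Rightarrow> bool" where
  "etale_cubic emb \<longleftrightarrow> cubic_algebra emb \<and>
     (\<forall>x. (\<forall>y. Tr_E emb (x * y) = 0) \<longrightarrow> x = 0)"

definition padd :: "'e::comm_ring_1 \<times> 'e \<Rightarrow> 'e \<times> 'e \<Rightarrow> 'e \<times> 'e" where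
  "padd v w = (fst v + fst w, snd v + snd w)"

definition psc :: "'e::comm_ring_1 \<Rightarrow> 'e \<times> 'e \<Rightarrow> 'e \<times> 'e" where
  "psc a v = (a * fst v, a * snd v)"

definition bQ :: "('e::comm_ring_1 \<times> 'e \<Rightarrow> 'e) \<Rightarrow> 'e \<times> 'e \<Rightarrow> 'e \<times> 'e \<Rightarrow> 'e" where
  "bQ Q v w = Q (padd v w) - Q v - Q w"

definition polar_map :: "('e::comm_ring_1 \<times> 'e \<Rightarrow> 'e \<times> 'e) \<Rightarrow> 'e \<times> 'e \<Rightarrow> 'e \<times> 'e \<Rightarrow> 'e \<times> 'e" where
  "polar_map \<beta> v w = (fst (\<beta> (padd v w)) - fst (\<beta> v) - fst (\<beta> w),
                       snd (\<beta> (padd v w)) - snd (\<beta> v) - snd (\<beta> w))"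

text \<open>Q is a nondegenerate quadratic form over E; beta is a quadratic map over F
 (homogeneity of degree 2 over F follows from beta(av) = a^# beta(v)).\<close>
definition twisted_comp :: "('f::field \<Rightarrow> 'e::comm_ring_1) \<Rightarrow> ('e \<times> 'e \<Rightarrow> 'e)
      \<Rightarrow> ('e \<times> 'e \<Rightarrow> 'e \<times> 'e) \<Rightarrow> bool" where
  "twisted_comp emb Q \<beta> \<longleftrightarrow>
     (\<forall>a v. Q (psc a v) = a * a * Q v) \<and>
     (\<forall>u v w. bQ Q (padd u v) w = bQ Q u w + bQ Q v w) \<and>
     (\<forall>a v w. bQ Q (psc a v) w = a * bQ Q v w) \<and>
     (\<forall>v. (\<forall>w. bQ Q v w = 0) \<longrightarrow> v = (0, 0)) \<and>
     (\<forall>u v w. polar_map \<beta> (padd u v) w = padd (polar_map \<beta> u w) (polar_map \<beta> v w)) \<and>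
     (\<forall>c v w. polar_map \<beta> (psc (emb c) v) w = psc (emb c) (polar_map \<beta> v w)) \<and>
     (\<forall>a v. \<beta> (psc a v) = psc (adj emb a) (\<beta> v)) \<and>
     (\<forall>v. Q (\<beta> v) = adj emb (Q v)) \<and>
     (\<forall>v. bQ Q v (\<beta> v) \<in> range emb)"

definition N_C :: "('f::field \<Rightarrow> 'e::comm_ring_1) \<Rightarrow> ('e \<times> 'e \<Rightarrow> 'e)
      \<Rightarrow> ('e \<times> 'e \<Rightarrow> 'e \<times> 'e) \<Rightarrow> 'e \<times> 'e \<Rightarrow> 'f" where
  "N_C emb Q \<beta> v = (THE c. emb c = bQ Q v (\<beta> v))"

definition Delta_C :: "('f::field \<Rightarrow> 'e::comm_ring_1) \<Rightarrow> ('e \<times> 'e \<Rightarrow> 'e)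
      \<Rightarrow> ('e \<times> 'e \<Rightarrow> 'e \<times> 'e) \<Rightarrow> 'e \<times> 'e \<Rightarrow> 'f" where
  "Delta_C emb Q \<beta> v = (N_C emb Q \<beta> v)^2 - 4 * N_E emb (Q v)"

definition phi_Q :: "('f::field \<Rightarrow> 'e::comm_ring_1) \<Rightarrow> 'f \<times> 'e \<times> 'e \<times> 'f \<Rightarrow> 'e \<times> 'e \<Rightarrow> 'e" where
  "phi_Q emb cube v = (case cube of (a, e, f, b) \<Rightarrow> (case v of (x, y) \<Rightarrow>
      (adj emb e - emb a * f) * x^2
    + (- emb (a * b) - 2 * e * f + emb (Tr_E emb (e * f))) * x * y
    + (adj emb f - emb b * e) * y^2))"

definition phi_beta :: "('f::field \<Rightarrow> 'e::comm_ring_1) \<Rightarrow> 'f \<times> 'e \<times> 'e \<times> 'f \<Rightarrow> 'e \<times> 'e \<Rightarrow> 'e \<times> 'e" where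
  "phi_beta emb cube v = (case cube of (a, e, f, b) \<Rightarrow> (case v of (x, y) \<Rightarrow>
      (- e * adj emb x - emb b * adj emb y - cross emb (f * x) y,
       emb a * adj emb x + f * adj emb y + cross emb (e * y) x)))"

definition phi_tilde :: "('f::field \<Rightarrow> 'e::comm_ring_1) \<Rightarrow> 'f \<times> 'e \<times> 'e \<times> 'f
      \<Rightarrow> ('e \<times> 'e \<Rightarrow> 'e) \<times> ('e \<times> 'e \<Rightarrow> 'e \<times> 'e)" where
  "phi_tilde emb cube = (phi_Q emb cube, phi_beta emb cube)"

definition Delta_E :: "('f::field \<Rightarrow> 'e::comm_ring_1) \<Rightarrow> 'f \<times> 'e \<times> 'e \<times> 'f \<Rightarrow> 'f" where
  "Delta_E emb cube = (case cube of (a, e, f, b) \<Rightarrow>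
      a^2 * b^2 - 2 * a * b * Tr_E emb (e * f) + Tr_E emb (e^2 * f^2)
    + 4 * a * N_E emb f + 4 * b * N_E emb e - 2 * Tr_E emb (adj emb e * adj emb f))"

end

theory Submission
  imports Defs
begin

text \<open>
  Write \<open>q = Q(e\<^sub>1)\<close> and \<open>n = N\<^sub>C(e\<^sub>1) = b\<^sub>Q(e\<^sub>1, e\<^sub>2)\<close>. Since \<open>e\<^sub>2 = \<beta>(e\<^sub>1)\<close> we get
  \<open>Q(e\<^sub>2) = q\<^sup>#\<close>, hence \<open>Q(x, y) = q x\<^sup>2 + n x y + q\<^sup># y\<^sup>2\<close>, and
  \<open>\<beta>(x, y) = (0, x\<^sup>#) + y\<^sup># \<beta>(e\<^sub>2) + \<beta>(x e\<^sub>1, y e\<^sub>2)\<close> with a bilinear last term.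
  Expanding \<open>Q(\<beta>(u + c w)) = Q(u + c w)\<^sup>#\<close> and \<open>b\<^sub>Q(v, \<beta> v) \<in> F\<close> along lines as quartics in
  \<open>c \<in> F\<close> (whose coefficients can be isolated since \<open>2, 3 \<noteq> 0\<close>) gives linear identities
  for the unknowns. Their \<open>2 \<times> 2\<close> systems have determinant \<open>4 N(q) - n\<^sup>2\<close>, a unit because
  \<open>Q\<close> is nondegenerate; the one remaining freedom is an additive \<open>F\<close>-valued function, which
  must vanish because an etale cubic algebra has elements that are not quadratic over \<open>F\<close>.
  The identities for the adjoint used throughout come from the Cayley--Hamilton theorem for
  the regular representation. Finally \<open>\<Delta>\<^sub>E(1, 0, -q, -n) = n\<^sup>2 - 4 N(q) = \<Delta>\<^sub>C(e\<^sub>1)\<close>.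
\<close>

lemma less_pairs_3: "{(i,j). i < (j::3)} = {(1,2),(3,1),(3,2)}"
proof -
  \<comment> \<open>In the numeral type \<open>3\<close> the element \<open>3\<close> is \<open>0\<close>, the least one.\<close>
  have lt: "(1::3) < 2" "(3::3) < 1" "(3::3) < 2" "\<not> (2::3) < 1" "\<not> (1::3) < 3" "\<not> (2::3) < 3"
    by (simp_all add: less_bit1_def bit1.Rep_numeral bit1.Rep_1)
  show ?thesis
  proof (rule set_eqI, clarify)
    fix i j :: 3
    show "((i,j) \<in> {(i,j). i<j}) = ((i,j) \<in> {(1,2),(3,1),(3,2)})"
      using exhaust_3[of i] exhaust_3[of j] lt by (elim disjE) simp_all
  qed
qed

definition pminor_sum :: "'a::comm_ring_1^3^3 \<Rightarrow> 'a" where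
  "pminor_sum M = M$1$1*M$2$2 - M$1$2*M$2$1 + M$3$3*M$1$1 - M$3$1*M$1$3 + M$3$3*M$2$2 - M$3$2*M$2$3"

lemma cayley_hamilton_3:
  fixes M :: "'a::comm_ring_1^3^3"
  shows "M**M**M - (\<chi> i j. trace M * (M**M)$i$j) + (\<chi> i j. pminor_sum M * M$i$j)
    - (\<chi> i j. det M * mat 1$i$j) = 0"
  unfolding vec_eq_iff forall_3
  by (simp add: matrix_matrix_mult_def sum_3 trace_def det_3 mat_def pminor_sum_def algebra_simps)

lemma two_pminor_sum:
  fixes M :: "'a::comm_ring_1^3^3"
  shows "2 * pminor_sum M = trace M ^ 2 - trace (M ** M)"
  by (simp add: matrix_matrix_mult_def sum_3 trace_def pminor_sum_def power2_eq_square algebra_simps)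

lemma det_uminus_3:
  fixes M :: "'a::comm_ring_1^3^3"
  shows "det (- M) = - det M"
  by (simp add: det_3)

lemma S_E_eq_pminor_sum: "S_E emb x = pminor_sum (lmat emb x)"
  unfolding S_E_def less_pairs_3 pminor_sum_def by simp

locale cubic_alg =
  fixes emb :: "'f::field \<Rightarrow> 'e::comm_ring_1"
  assumes cubic: "cubic_algebra emb"
begin

abbreviation "bb \<equiv> ebasis emb"
abbreviation "cd x \<equiv> coords emb (ebasis emb) x"
abbreviation "LM x \<equiv> lmat emb x"
abbreviation "T x \<equiv> Tr_E emb x"
abbreviation "S x \<equiv> S_E emb x"
abbreviation "N x \<equiv> N_E emb x"

lemma emb_hom: "emb 1 = 1" "emb (a + b) = emb a + emb b" "emb (a * b) = emb a * emb b"
  using cubic unfolding cubic_algebra_def F_algebra_def by auto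

lemma emb0 [simp]: "emb 0 = 0"
  using emb_hom(2)[of 0 0] by simp
lemma emb1 [simp]: "emb 1 = 1" by (rule emb_hom(1))
lemma emb_add [simp]: "emb (a + b) = emb a + emb b" by (rule emb_hom(2))
lemma emb_mult [simp]: "emb (a * b) = emb a * emb b" by (rule emb_hom(3))
lemma emb_uminus [simp]: "emb (- a) = - emb a"
  using emb_hom(2)[of a "-a"] by (simp add: eq_neg_iff_add_eq_0 add.commute)
lemma emb_diff [simp]: "emb (a - b) = emb a - emb b"
  using emb_add[of a "-b"] by simp
lemma emb_numeral [simp]: "emb (numeral k) = numeral k"
  by (induction k) (simp_all only: numeral.simps emb_add emb1)

lemma emb_power [simp]: "emb (a ^ k) = emb a ^ k"
  by (induction k) simp_all

lemma emb_inverse_mult: "c \<noteq> 0 \<Longrightarrow> emb (inverse c) * emb c = 1"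
  by (simp flip: emb_mult)

lemma is_basis3_ebasis: "is_basis3 emb bb"
proof -
  obtain b where "is_basis3 emb b" using cubic unfolding cubic_algebra_def by auto
  then show ?thesis unfolding ebasis_def by (rule someI[where P="is_basis3 emb"])
qed

lemma coords_repr: "x = (\<Sum>i\<in>UNIV. emb (cd x $ i) * bb i)"
proof -
  have "\<exists>!c::'f^3. x = (\<Sum>i\<in>UNIV. emb (c$i) * bb i)"
    using is_basis3_ebasis unfolding is_basis3_def by auto
  then show ?thesis unfolding coords_def by (rule theI')
qed

lemma coords_unique: "x = (\<Sum>i\<in>UNIV. emb (c $ i) * bb i) \<Longrightarrow> cd x = c"
  using is_basis3_ebasis coords_repr[of x] unfolding is_basis3_def by metis

lemma one_neq_zero_E: "(1::'e) \<noteq> 0"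
proof
  assume "(1::'e) = 0"
  then have all: "y = 0" for y :: 'e by (metis mult_1 mult_zero_left)
  have "cd 0 = 0" by (rule coords_unique) (simp add: all)
  moreover have "cd 0 = (\<chi> i. 1)" by (rule coords_unique) (simp add: all)
  ultimately show False by (metis vec_lambda_beta zero_index zero_neq_one)
qed

lemma emb_inj: "emb a = emb b \<longleftrightarrow> a = b"
proof
  assume "emb a = emb b"
  then have "emb (a - b) = 0" by simp
  then show "a = b"
    using emb_inverse_mult[of "a - b"] one_neq_zero_E by force
qed simp

lemma emb_eq_0_iff [simp]: "emb a = 0 \<longleftrightarrow> a = 0"
  using emb_inj[of a 0] by simp

lemma coords_add: "cd (x + y) = cd x + cd y"
  by (rule coords_unique, subst coords_repr[of x], subst coords_repr[of y])
    (simp add: sum.distrib distrib_right)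

lemma coords_scale: "cd (emb c * x) = c *s cd x"
  by (rule coords_unique, subst coords_repr[of x]) (simp add: sum_distrib_left mult.assoc)

lemma coords_zero_iff: "cd x = 0 \<longleftrightarrow> x = 0"
  using coords_repr[of x] coords_unique[of 0 0] by auto

lemma coords_basis: "cd (bb j) = axis j 1"
  by (rule coords_unique) (use exhaust_3[of j] in \<open>auto simp: axis_def sum_3\<close>)

lemma lmat_entry: "LM x $ i $ j = cd (x * bb j) $ i"
  unfolding lmat_def by simp

lemma lmat_add: "LM (x + y) = LM x + LM y"
  by (simp add: vec_eq_iff lmat_entry distrib_right coords_add)

lemma lmat_diff: "LM (x - y) = LM x - LM y"
  using lmat_add[of "x - y" y] by simp

lemma lmat_scale: "LM (emb c * x) $ i $ j = c * LM x $ i $ j"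
  by (simp add: lmat_entry mult.assoc coords_scale)

lemma lmat_mult: "LM (x * y) = LM x ** LM y"
proof -
  have "(x * y) * bb j = (\<Sum>k\<in>UNIV. emb (cd (y * bb j) $ k) * (x * bb k))" for j
  proof -
    have "(x * y) * bb j = x * (\<Sum>k\<in>UNIV. emb (cd (y * bb j) $ k) * bb k)"
      using coords_repr[of "y * bb j"] by (simp add: mult.assoc)
    then show ?thesis by (simp add: sum_distrib_left ac_simps)
  qed
  then have "cd ((x * y) * bb j) = (\<Sum>k\<in>UNIV. cd (y * bb j) $ k *s cd (x * bb k))" for j
    by (simp add: sum_3 coords_add coords_scale)
  then show ?thesis
    unfolding vec_eq_iff lmat_entry matrix_matrix_mult_def
    by (simp add: sum_component mult.commute)
qed

lemma lmat_one: "LM 1 = mat 1"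
  by (simp add: vec_eq_iff lmat_entry coords_basis axis_def mat_def)

lemma lmat_emb: "LM (emb c) $ i $ j = c * mat 1 $ i $ j"
  using lmat_scale[of c 1 i j] by (simp add: lmat_one)

lemma lmat_eq_0D: "LM x = 0 \<Longrightarrow> x = 0"
proof -
  assume "LM x = 0"
  then have "x * bb j = 0" for j
    unfolding vec_eq_iff lmat_entry by (metis coords_zero_iff vec_eq_iff zero_index)
  then have "x * (\<Sum>i\<in>UNIV. emb (cd 1 $ i) * bb i) = 0"
    by (simp add: sum_distrib_left mult.left_commute[of x])
  then show "x = 0" using coords_repr[of 1] by simp
qed

lemma T_add: "T (x + y) = T x + T y"
  unfolding Tr_E_def lmat_add by (simp add: trace_def sum.distrib)

lemma T_scale: "T (emb c * x) = c * T x"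
  unfolding Tr_E_def by (simp add: trace_def lmat_scale sum_distrib_left)

lemma T_zero [simp]: "T 0 = 0"
  using T_scale[of 0 0] by simp

lemma T_one: "T 1 = 3"
  unfolding Tr_E_def lmat_one by (simp add: trace_def mat_def sum_3)

lemma two_S: "2 * S x = (T x)^2 - T (x * x)"
  unfolding S_E_eq_pminor_sum Tr_E_def lmat_mult by (rule two_pminor_sum)

lemma N_zero [simp]: "N 0 = 0"
proof -
  have "LM 0 = 0" using lmat_add[of 0 0] by simp
  then show ?thesis unfolding N_E_def by (simp add: det_3)
qed

lemma N_uminus: "N (- x) = - N x"
proof -
  have "LM (- x) = - LM x"
    using lmat_add[of x "-x"] lmat_add[of 0 0] by (simp add: eq_neg_iff_add_eq_0)
  then show ?thesis unfolding N_E_def by (simp add: det_uminus_3)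
qed

lemma cayley_hamilton_E: "x * x * x - emb (T x) * (x * x) + emb (S x) * x - emb (N x) = 0"
proof (rule lmat_eq_0D)
  have "LM (x * x * x - emb (T x) * (x * x) + emb (S x) * x - emb (N x)) =
    LM x ** LM x ** LM x - (\<chi> i j. trace (LM x) * (LM x ** LM x)$i$j)
      + (\<chi> i j. pminor_sum (LM x) * LM x $i$j) - (\<chi> i j. det (LM x) * mat 1$i$j)"
    unfolding lmat_diff lmat_add vec_eq_iff
    by (simp only: vec_lambda_beta vector_minus_component vector_add_component lmat_scale lmat_emb)
      (simp only: lmat_mult Tr_E_def S_E_eq_pminor_sum N_E_def, simp)
  then show "LM (x * x * x - emb (T x) * (x * x) + emb (S x) * x - emb (N x)) = 0"
    by (simp only: cayley_hamilton_3)
qed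

definition F_basis3 :: "'e \<Rightarrow> 'e \<Rightarrow> 'e \<Rightarrow> bool" where
  "F_basis3 u v w \<longleftrightarrow> (\<forall>e. \<exists>a b c. e = emb a * u + emb b * v + emb c * w) \<and>
     (\<forall>a b c a' b' c'. emb a * u + emb b * v + emb c * w = emb a' * u + emb b' * v + emb c' * w
        \<longrightarrow> a = a' \<and> b = b' \<and> c = c')"

lemma F_basis3_ebasis: "F_basis3 (bb 1) (bb 2) (bb 3)"
  unfolding F_basis3_def
proof (rule conjI; intro allI impI)
  fix e
  show "\<exists>a b c. e = emb a * bb 1 + emb b * bb 2 + emb c * bb 3"
    using coords_repr[of e] by (auto simp: sum_3)
next
  fix a b c a' b' c'
  assume h: "emb a * bb 1 + emb b * bb 2 + emb c * bb 3 = emb a' * bb 1 + emb b' * bb 2 + emb c' * bb 3"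
  have "cd (emb a * bb 1 + emb b * bb 2 + emb c * bb 3) = vector [a, b, c]"
    by (rule coords_unique) (simp add: sum_3 vector_def)
  moreover have "cd (emb a' * bb 1 + emb b' * bb 2 + emb c' * bb 3) = vector [a', b', c']"
    by (rule coords_unique) (simp add: sum_3 vector_def)
  ultimately have "(vector [a, b, c] :: 'f^3) = vector [a', b', c']" using h by simp
  then show "a = a' \<and> b = b' \<and> c = c'" by (metis vector_3)
qed

lemma F_basis3_swap12: assumes "F_basis3 u v w" shows "F_basis3 v u w"
  unfolding F_basis3_def
proof (rule conjI; intro allI impI)
  fix e obtain a b c where "e = emb a * u + emb b * v + emb c * w"
    using assms unfolding F_basis3_def by blast
  then show "\<exists>a b c. e = emb a * v + emb b * u + emb c * w" by (metis add.commute)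
next
  fix a b c a' b' c'
  assume "emb a * v + emb b * u + emb c * w = emb a' * v + emb b' * u + emb c' * w"
  then have "emb b * u + emb a * v + emb c * w = emb b' * u + emb a' * v + emb c' * w"
    by (simp add: ac_simps)
  then show "a = a' \<and> b = b' \<and> c = c'" using assms unfolding F_basis3_def by blast
qed

lemma F_basis3_swap13: assumes "F_basis3 u v w" shows "F_basis3 w v u"
  unfolding F_basis3_def
proof (rule conjI; intro allI impI)
  fix e obtain a b c where "e = emb a * u + emb b * v + emb c * w"
    using assms unfolding F_basis3_def by blast
  then have "e = emb c * w + emb b * v + emb a * u" by (simp add: ac_simps)
  then show "\<exists>a b c. e = emb a * w + emb b * v + emb c * u" by blast
next
  fix a b c a' b' c'
  assume "emb a * w + emb b * v + emb c * u = emb a' * w + emb b' * v + emb c' * u"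
  then have "emb c * u + emb b * v + emb a * w = emb c' * u + emb b' * v + emb a' * w"
    by (simp add: ac_simps)
  then show "a = a' \<and> b = b' \<and> c = c'" using assms unfolding F_basis3_def by blast
qed

lemma F_basis3_exchange:
  assumes b: "F_basis3 u v w" and one: "1 = emb a * u + emb b * v + emb c * w" and a: "a \<noteq> 0"
  shows "F_basis3 1 v w"
  unfolding F_basis3_def
proof (rule conjI; intro allI impI)
  have u: "u = emb (inverse a) * 1 - emb (inverse a * b) * v - emb (inverse a * c) * w"
  proof -
    have "emb a * u = 1 - emb b * v - emb c * w" using one by (simp add: algebra_simps)
    then have "emb (inverse a) * (emb a * u) = emb (inverse a) * (1 - emb b * v - emb c * w)"
      by simp
    moreover have "emb (inverse a) * (emb a * u) = u"
      using emb_inverse_mult[OF a] by (simp add: mult.assoc[symmetric])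
    ultimately show ?thesis by (simp add: algebra_simps)
  qed
  fix e
  obtain p q r where e: "e = emb p * u + emb q * v + emb r * w"
    using b unfolding F_basis3_def by blast
  show "\<exists>a b c. e = emb a * 1 + emb b * v + emb c * w"
    by (rule exI[of _ "p * inverse a"], rule exI[of _ "q - p * inverse a * b"],
        rule exI[of _ "r - p * inverse a * c"])
      (unfold e, subst u, simp add: algebra_simps)
next
  fix p q r p' q' r'
  assume h: "emb p * 1 + emb q * v + emb r * w = emb p' * 1 + emb q' * v + emb r' * w"
  have "emb p * 1 = emb (p * a) * u + emb (p * b) * v + emb (p * c) * w"
    "emb p' * 1 = emb (p' * a) * u + emb (p' * b) * v + emb (p' * c) * w"
    by (subst one, simp add: algebra_simps)+
  then have "emb (p * a) * u + emb (p * b + q) * v + emb (p * c + r) * w =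
     emb (p' * a) * u + emb (p' * b + q') * v + emb (p' * c + r') * w"
    using h by (simp add: algebra_simps)
  then have "p * a = p' * a \<and> p * b + q = p' * b + q' \<and> p * c + r = p' * c + r'"
    using b unfolding F_basis3_def by blast
  then show "p = p' \<and> q = q' \<and> r = r'" using a by auto
qed

lemma ex_F_basis3_one: "\<exists>x y. F_basis3 1 x y"
proof -
  obtain a b c where one: "1 = emb a * bb 1 + emb b * bb 2 + emb c * bb 3"
    using F_basis3_ebasis unfolding F_basis3_def by blast
  then have "a \<noteq> 0 \<or> b \<noteq> 0 \<or> c \<noteq> 0" using one_neq_zero_E by auto
  then show ?thesis
  proof (elim disjE)
    assume "a \<noteq> 0" then show ?thesis using F_basis3_exchange[OF F_basis3_ebasis one] by blast
  next
    assume "b \<noteq> 0"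
    moreover have "1 = emb b * bb 2 + emb a * bb 1 + emb c * bb 3" using one by (simp add: algebra_simps)
    ultimately show ?thesis using F_basis3_exchange[OF F_basis3_swap12[OF F_basis3_ebasis]] by blast
  next
    assume "c \<noteq> 0"
    moreover have "1 = emb c * bb 3 + emb b * bb 2 + emb a * bb 1" using one by (simp add: algebra_simps)
    ultimately show ?thesis using F_basis3_exchange[OF F_basis3_swap13[OF F_basis3_ebasis]] by blast
  qed
qed

lemma F_basis3_one_coeffs_eq:
  assumes "F_basis3 1 x y" "emb a + emb b * x + emb c * y = emb a' + emb b' * x + emb c' * y"
  shows "a = a' \<and> b = b' \<and> c = c'"
  using assms unfolding F_basis3_def by (metis mult.right_neutral)

end

text \<open>Identities in a commutative ring are proved below by exhibiting the difference of the two
  sides as a linear combination of known identities.\<close>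

lemma eq_by_lincomb1:
  fixes l :: "'a::comm_ring_1"
  assumes "a1 = b1" "l - r = ka * (a1 - b1)" shows "l = r"
  using assms by simp

lemma eq_by_lincomb2:
  fixes l :: "'a::comm_ring_1"
  assumes "a1 = b1" "a2 = b2" "l - r = ka * (a1 - b1) + kb * (a2 - b2)" shows "l = r"
  using assms by simp

lemma eq_by_lincomb3:
  fixes l :: "'a::comm_ring_1"
  assumes "a1 = b1" "a2 = b2" "a3 = b3" "l - r = ka * (a1 - b1) + kb * (a2 - b2) + kc * (a3 - b3)"
  shows "l = r"
  using assms by simp

lemma eq_by_lincomb4:
  fixes l :: "'a::comm_ring_1"
  assumes "a1 = b1" "a2 = b2" "a3 = b3" "a4 = b4"
    "l - r = ka * (a1 - b1) + kb * (a2 - b2) + kc * (a3 - b3) + kd * (a4 - b4)"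
  shows "l = r"
  using assms by simp

locale cubic_alg_char = cubic_alg emb for emb :: "'f::field \<Rightarrow> 'e::comm_ring_1" +
  assumes two: "(2::'f) \<noteq> 0" and three: "(3::'f) \<noteq> 0"
begin

abbreviation "tt x \<equiv> emb (T x)"
abbreviation "ss x \<equiv> emb (S x)"
abbreviation "nn x \<equiv> emb (N x)"
abbreviation "ad x \<equiv> adj emb x"
abbreviation "cr x y \<equiv> cross emb x y"

lemma quartic_coeffs:
  assumes "\<And>c. f c = A0 + emb c * A1 + emb c ^ 2 * A2 + emb c ^ 3 * A3 + emb c ^ 4 * A4"
  shows "A1 = emb (inverse 12) * (8 * (f 1 - f (-1)) - (f 2 - f (-2)))"
    and "A2 = emb (inverse 24) * (16 * (f 1 + f (-1)) - (f 2 + f (-2)) - 30 * f 0)"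
proof -
  have "(12::'f) \<noteq> 0" "(24::'f) \<noteq> 0"
    using two three mult_eq_0_iff[of "2::'f" 6] mult_eq_0_iff[of "2::'f" 3] mult_eq_0_iff[of "4::'f" 6]
      mult_eq_0_iff[of "2::'f" 2] by auto
  note inv = this[THEN emb_inverse_mult]
  have "8 * (f 1 - f (-1)) - (f 2 - f (-2)) = 12 * A1"
    unfolding assms by (simp add: algebra_simps)
  then show "A1 = emb (inverse 12) * (8 * (f 1 - f (-1)) - (f 2 - f (-2)))"
    using inv(1) by (simp add: mult.assoc[symmetric])
  have "16 * (f 1 + f (-1)) - (f 2 + f (-2)) - 30 * f 0 = 24 * A2"
    unfolding assms by (simp add: algebra_simps)
  then show "A2 = emb (inverse 24) * (16 * (f 1 + f (-1)) - (f 2 + f (-2)) - 30 * f 0)"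
    using inv(2) by (simp add: mult.assoc[symmetric])
qed

lemma two_mult_cancel: "2 * a = 2 * b \<Longrightarrow> a = (b::'f)" using two by simp
lemma three_mult_cancel: "3 * a = 3 * b \<Longrightarrow> a = (b::'f)" using three by simp

lemma T_uminus: "T (- x) = - T x" using T_scale[of "-1" x] by simp
lemma T_diff: "T (x - y) = T x - T y" using T_add[of x "-y"] T_uminus[of y] by simp
lemma T_emb: "T (emb c) = 3 * c" using T_scale[of c 1] T_one by simp

lemma T_square: "T (x * x) = T x ^ 2 - 2 * S x"
  using two_S[of x] by simp

lemma S_add: "S (x + y) = S x + S y + T x * T y - T (x * y)"
proof -
  have e: "(x + y) * (x + y) = x * x + x * y + x * y + y * y" by (simp add: algebra_simps)
  have t: "T ((x + y) * (x + y)) = T (x * x) + 2 * T (x * y) + T (y * y)"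
    unfolding e T_add by (simp only: mult_2 add.assoc)
  have a: "2 * S (x + y) = (T x + T y)^2 - (T (x * x) + 2 * T (x * y) + T (y * y))"
    using two_S[of "x+y"] by (simp only: t T_add)
  have "2 * (S x + S y + T x * T y - T (x * y)) = 2*S x + 2*S y + 2*(T x*T y - T(x*y))"
    by (simp add: algebra_simps)
  also have "\<dots> = (T x^2 - T(x*x)) + (T y^2 - T(y*y)) + 2*(T x*T y - T(x*y))"
    by (simp only: two_S)
  also have "\<dots> = 2 * S (x + y)" unfolding a by (simp add: power2_eq_square algebra_simps)
  finally have "2 * S (x + y) = 2 * (S x + S y + T x * T y - T (x * y))" by simp
  then show ?thesis by (rule two_mult_cancel)
qed

lemma S_scale: "S (emb c * x) = c^2 * S x"
proof -
  have e: "emb c * x * (emb c * x) = emb (c * c) * (x * x)" by (simp add: algebra_simps)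
  have h: "T x * T x = T (x*x) + 2 * S x" using two_S[of x] by (simp add: power2_eq_square)
  have "2 * S (emb c * x) = 2 * (c^2 * S x)"
    unfolding two_S e T_scale power2_eq_square by (simp add: h algebra_simps)
  then show ?thesis by (rule two_mult_cancel)
qed

lemma S_emb: "S (emb c) = 3 * c^2"
proof -
  have "2 * S 1 = 2 * 3" unfolding two_S by (simp add: T_one power2_eq_square)
  then have "S 1 = 3" by (rule two_mult_cancel)
  then show ?thesis using S_scale[of c 1] by simp
qed

lemma S_uminus: "S (- x) = S x" using S_scale[of "-1" x] by simp

lemma adj_eq: "ad x = x * x - tt x * x + ss x"
  unfolding adj_def by simp

lemma cross_eq: "cr x y = 2 * x * y - tt x * y - tt y * x + tt x * tt y - tt (x * y)"
  unfolding cross_def adj_def S_add T_add by (simp add: algebra_simps)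

lemma adj_zero [simp]: "ad 0 = 0" using S_scale[of 0 0] by (simp add: adj_eq)
lemma cross_zero [simp]: "cr 0 z = 0" by (simp add: cross_eq)
lemma adj_uminus: "ad (- x) = ad x" by (simp add: adj_eq T_uminus S_uminus)
lemma adj_scale: "ad (emb c * x) = emb c ^ 2 * ad x"
  unfolding adj_eq T_scale S_scale by (simp add: algebra_simps power2_eq_square)
lemma adj_emb: "ad (emb c) = emb c ^ 2"
  unfolding adj_eq T_emb S_emb by (simp add: algebra_simps power2_eq_square)
lemma adj_add: "ad (x + y) = ad x + ad y + cr x y"
  unfolding cross_def by simp
lemma cross_comm: "cr x y = cr y x" unfolding cross_eq by (simp add: algebra_simps)
lemma cross_add: "cr (x + y) z = cr x z + cr y z"
  unfolding cross_eq distrib_right T_add by (simp add: algebra_simps)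
lemma cross_add_right: "cr z (x + y) = cr z x + cr z y"
  using cross_add cross_comm by metis
lemma cross_scale: "cr (emb c * x) z = emb c * cr x z"
  unfolding cross_eq mult.assoc T_scale by (simp add: algebra_simps)
lemma cross_scale_right: "cr z (emb c * x) = emb c * cr z x"
  using cross_scale cross_comm by metis
lemma cross_uminus: "cr (- x) z = - cr x z"
  using cross_scale[of "-1" x z] by simp
lemma cross_one: "cr x 1 = tt x - x"
  unfolding cross_eq T_one by (simp add: algebra_simps)

lemma mult_adj: "x * ad x = nn x"
  using cayley_hamilton_E[of x] unfolding adj_eq by (simp add: algebra_simps)

lemma T_adj: "T (ad x) = S x"
proof -
  have "ad x = x * x - emb (T x) * x + emb (S x) * 1" by (simp add: adj_eq)
  then show ?thesis
    by (simp only: T_add T_diff T_scale T_square T_one) (simp add: algebra_simps power2_eq_square)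
qed

definition N_lin :: "'e \<Rightarrow> 'e \<Rightarrow> 'e" where
  "N_lin x y = 3 * (x * x * y) - 2 * tt x * (x * y) - tt y * (x * x) + ss x * y
     + (tt x * tt y - tt (x * y)) * x"

lemma N_lin_eq: "N_lin x y = ad x * y + x * cr x y"
  unfolding N_lin_def adj_eq cross_eq by (simp add: algebra_simps)

lemma nn_add_scaled:
  "nn (x + emb c * y) = nn x + emb c * N_lin x y + emb c ^ 2 * N_lin y x + emb c ^ 3 * nn y + emb c ^ 4 * 0"
proof -
  have h: "nn z = z * z * z - tt z * (z * z) + ss z * z" for z
    using cayley_hamilton_E by (simp add: algebra_simps)
  have t: "tt (x + emb c * y) = tt x + emb c * tt y" by (simp add: T_add T_scale)
  have e: "x * (emb c * y) = emb c * (x * y)" by (simp add: algebra_simps)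
  have s: "ss (x + emb c * y) = ss x + emb c ^ 2 * ss y + emb c * (tt x * tt y - tt (x * y))"
    unfolding S_add S_scale e T_scale by (simp add: algebra_simps)
  show ?thesis unfolding h[of "x + emb c * y"] h[of x] h[of y] t s N_lin_def
    by (simp add: algebra_simps power2_eq_square power3_eq_cube power4_eq_xxxx)
qed

lemma T_N_lin: "T (N_lin x y) = 3 * (T (x * x * y) - T x * T (x * y) + S x * T y)"
proof -
  have "N_lin x y = emb 3 * (x * x * y) - emb (2 * T x) * (x * y) - emb (T y) * (x * x)
      + emb (S x) * y + emb (T x * T y - T (x * y)) * x"
    unfolding N_lin_def by simp
  then show ?thesis
    by (simp only: T_add T_diff T_scale T_square) (simp add: algebra_simps power2_eq_square)
qed

text \<open>The linearization of \<open>x x\<^sup># = N(x)\<close>: the coefficient of \<open>c\<close> in \<open>N(x + c y)\<close>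
  is in \<open>F\<close>, and its value is read off from its trace.\<close>
lemma adj_mult_plus_cross:
  "ad x * y + x * cr x y = emb (T (x * x * y) - T x * T (x * y) + S x * T y)"
proof -
  have "N_lin x y = emb (inverse 12) * (8 * (nn (x + emb 1 * y) - nn (x + emb (-1) * y))
      - (nn (x + emb 2 * y) - nn (x + emb (-2) * y)))"
    by (rule quartic_coeffs(1)[where f = "\<lambda>c. nn (x + emb c * y)", OF nn_add_scaled])
  then obtain a where a: "N_lin x y = emb a" by (metis emb_diff emb_mult emb_numeral)
  then have "3 * a = 3 * (T (x * x * y) - T x * T (x * y) + S x * T y)"
    using T_N_lin T_emb by metis
  then have "a = T (x * x * y) - T x * T (x * y) + S x * T y" by (rule three_mult_cancel)
  then show ?thesis using a N_lin_eq by simp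
qed

lemma polarized_adj_mult_plus_cross:
  "cr q x * y + q * cr x y + x * cr q y =
     emb (2 * T (q * x * y) - T q * T (x * y) - T x * T (q * y) + (T q * T x - T (q * x)) * T y)"
proof -
  have l: "ad (q + x) * y + (q + x) * cr (q + x) y
     = emb (T ((q + x) * (q + x) * y) - T (q + x) * T ((q + x) * y) + S (q + x) * T y)"
    by (rule adj_mult_plus_cross)
  have e1: "(q + x) * (q + x) * y = q * q * y + x * x * y + (q * x * y + q * x * y)"
    and e2: "(q + x) * y = q * y + x * y"
    by (simp_all add: algebra_simps)
  have "ad q * y + ad x * y + cr q x * y + (q * cr q y + q * cr x y + x * cr q y + x * cr x y) =
     emb (T (q * q * y) + T (x * x * y) + (T (q * x * y) + T (q * x * y))
       - (T q + T x) * (T (q * y) + T (x * y)) + (S q + S x + T q * T x - T (q * x)) * T y)"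
    using l unfolding e1 e2 T_add S_add adj_add cross_add cross_comm[of "q+x" y] cross_comm[of y q]
      cross_comm[of y x]
    by (simp add: algebra_simps)
  then show ?thesis
    by (rule eq_by_lincomb3[where ka=1 and kb="-1" and kc="-1", OF _ adj_mult_plus_cross adj_mult_plus_cross])
      (simp add: algebra_simps)
qed

lemma trace_sub_mult_trace_sub: "(tt x - x) * (tt q - q) - cr q x = tt (q * x) - q * x"
  unfolding cross_eq by (simp add: algebra_simps)

lemma cross_mult: "(tt x - x) * cr q y - cr q (x * y) = cr (q * x) y"
  by (rule eq_by_lincomb1[where ka="-1", OF polarized_adj_mult_plus_cross])
    (simp add: cross_eq algebra_simps)

lemma cross_adj_self: "q * (tt q - q)^2 - 2 * nn q = cr q (ad q)"
proof -
  have "T (q * ad q) = 3 * N q" using mult_adj[of q] T_emb by simp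
  then have c: "cr q (ad q) = 2 * q * ad q - tt q * ad q - ss q * q + tt q * ss q - 3 * nn q"
    unfolding cross_eq T_adj by simp
  show ?thesis unfolding c
    by (rule eq_by_lincomb2[where ka="tt q - q" and kb="-1", OF adj_eq[of q] mult_adj[of q]])
      (simp add: algebra_simps power2_eq_square)
qed

lemma adj_mult_adj:
  "ad q * ad x + (ss q - ad q) * x * (tt x - x) - x * q * cr q x =
     emb (T (q * q * ad x) - T q * T (q * ad x) + S q * S x)"
proof -
  have "ad q * ad x + q * (2 * q * ad x - tt q * ad x - ss x * q + tt q * ss x - tt (q * ad x))
     = emb (T (q * q * ad x) - T q * T (q * ad x) + S q * S x)"
    using adj_mult_plus_cross[of q "ad x"] unfolding cross_eq T_adj .
  moreover have "T (q * ad x) = T (x * x * q) - T x * T (x * q) + S x * T q"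
  proof -
    have "q * ad x = x * x * q - emb (T x) * (x * q) + emb (S x) * q" by (simp add: adj_eq algebra_simps)
    then show ?thesis by (simp only: T_add T_diff T_scale)
  qed
  then have "ad x * q + x * cr x q = tt (q * ad x)"
    using adj_mult_plus_cross by simp
  ultimately show ?thesis
    by (rule eq_by_lincomb4[where ka=1 and kb="-q" and kc="x*x - x*tt x" and kd="q*tt q - q*q",
          OF _ _ adj_eq[of q] adj_eq[of x]]) (simp add: cross_eq algebra_simps)
qed

lemma adj_add_scaled:
  "ad (X + emb c * Y + emb c ^ 2 * Z) = ad X + emb c * cr X Y + emb c ^ 2 * (ad Y + cr X Z)
     + emb c ^ 3 * cr Y Z + emb c ^ 4 * ad Z"
proof -
  have e2: "emb c ^ 2 = emb (c^2)" by simp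
  have "ad (X + emb c * Y + emb c ^ 2 * Z) = ad X + ad (emb c * Y) + cr X (emb c * Y) + ad (emb (c^2) * Z)
     + cr X (emb (c^2) * Z) + cr (emb c * Y) (emb (c^2) * Z)"
    unfolding adj_add cross_add e2 by (simp add: algebra_simps)
  also have "\<dots> = ad X + emb c ^ 2 * ad Y + emb c * cr X Y + emb (c^2) ^ 2 * ad Z + emb (c^2) * cr X Z
     + emb c * (emb (c^2) * cr Y Z)"
    by (simp only: adj_scale cross_scale_right cross_scale mult.left_commute[of "emb (c^2)" "emb c"])
  finally show ?thesis by (simp add: algebra_simps power2_eq_square power3_eq_cube power4_eq_xxxx)
qed

end

locale etale_cubic_alg = cubic_alg_char emb for emb :: "'f::field \<Rightarrow> 'e::comm_ring_1" +
  assumes trace_nondeg: "\<And>x. (\<And>y. Tr_E emb (x * y) = 0) \<Longrightarrow> x = 0"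
begin

lemma square_zero_eq_0:
  assumes sq: "x * x = 0" and line: "\<And>z. \<exists>c. x * z = emb c * x"
  shows "x = 0"
proof (cases "S x = 0")
  case False
  have "emb (S x) * x = emb (N x)"
    using cayley_hamilton_E[of x] sq by (simp add: algebra_simps)
  then have "x = emb (inverse (S x) * N x)"
    using emb_inverse_mult[OF False] by (metis emb_mult mult.assoc mult.left_commute mult_1)
  then show ?thesis using sq by (metis emb_eq_0_iff emb_mult mult_eq_0_iff)
next
  case True
  then have "T x = 0" using two_S[of x] sq by simp
  show ?thesis
  proof (rule trace_nondeg)
    fix z
    obtain c where "x * z = emb c * x" using line by blast
    then show "T (x * z) = 0" using \<open>T x = 0\<close> by (simp add: T_scale)
  qed
qed

lemma product_of_quadratic_basis:
  assumes H: "\<And>z. \<exists>a b. z * z = emb a + emb b * z"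
    and B: "F_basis3 1 x y"
    and h1: "x * x = emb a1 + emb (2 * c1) * x" and h2: "y * y = emb a2 + emb (2 * c2) * y"
  shows "\<exists>e. x * y = emb e + emb c2 * x + emb c1 * y"
proof -
  obtain a3 b3 where h3: "(x + y) * (x + y) = emb a3 + emb b3 * (x + y)" using H by blast
  obtain a4 b4 where h4: "(x - y) * (x - y) = emb a4 + emb b4 * (x - y)" using H by blast
  have "(x + y) * (x + y) + (x - y) * (x - y) = 2 * (x * x) + 2 * (y * y)" by (simp add: algebra_simps)
  then have "emb (a3 + a4) + emb (b3 + b4) * x + emb (b3 - b4) * y
      = emb (2 * a1 + 2 * a2) + emb (4 * c1) * x + emb (4 * c2) * y"
    unfolding h1 h2 h3 h4 by (simp add: algebra_simps)
  from F_basis3_one_coeffs_eq[OF B this] have c: "b3 + b4 = 4 * c1" "b3 - b4 = 4 * c2" by simp_all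
  have "4 * (x * y) = (x + y) * (x + y) - (x - y) * (x - y)" by (simp add: algebra_simps)
  also have "\<dots> = emb (a3 - a4) + emb (b3 - b4) * x + emb (b3 + b4) * y"
    unfolding h3 h4 by (simp add: algebra_simps)
  finally have xy4: "4 * (x * y) = emb (a3 - a4) + 4 * emb c2 * x + 4 * emb c1 * y"
    using c by (simp add: algebra_simps)
  have "(4::'f) \<noteq> 0" using two mult_eq_0_iff[of "2::'f" 2] by auto
  then have four: "emb (inverse 4) * 4 = (1::'e)" using emb_inverse_mult by fastforce
  have "x * y = emb (inverse 4) * (4 * (x * y))"
    using four by (simp add: mult.assoc[symmetric])
  also have "\<dots> = emb (inverse 4) * emb (a3 - a4) + (emb (inverse 4) * 4) * emb c2 * x
      + (emb (inverse 4) * 4) * emb c1 * y"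
    unfolding xy4 by (simp add: algebra_simps del: emb_diff)
  finally have "x * y = emb (inverse 4 * (a3 - a4)) + emb c2 * x + emb c1 * y"
    by (simp only: four emb_mult mult_1)
  then show ?thesis by blast
qed

text \<open>If every element were quadratic over \<open>F\<close>, shifting a basis \<open>1, x, y\<close> would produce a
  nonzero \<open>x\<^sub>0\<close> with \<open>x\<^sub>0\<^sup>2 = 0\<close> and \<open>x\<^sub>0 E = F x\<^sub>0\<close>, which the nondegenerate
  trace form excludes.\<close>
lemma ex_non_quadratic: "\<exists>y. \<forall>a b. y * y \<noteq> emb a + emb b * y"
proof (rule ccontr)
  assume "\<not> ?thesis"
  then have H: "\<And>z. \<exists>a b. z * z = emb a + emb b * z" by blast
  have half: "b = 2 * (b / 2)" for b :: 'f using two by simp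
  obtain x y where B: "F_basis3 1 x y" using ex_F_basis3_one by blast
  obtain a1 c1 where h1: "x * x = emb a1 + emb (2 * c1) * x" using H half by metis
  obtain a2 c2 where h2: "y * y = emb a2 + emb (2 * c2) * y" using H half by metis
  obtain e where xy: "x * y = emb e + emb c2 * x + emb c1 * y"
    using product_of_quadratic_basis[OF H B h1 h2] by blast
  define x0 where "x0 = x - emb c1"
  define y0 where "y0 = y - emb c2"
  have x0x0: "x0 * x0 = emb (a1 + c1 * c1)"
    unfolding x0_def using h1 by (simp add: algebra_simps)
  have x0y0: "x0 * y0 = emb (e + c1 * c2)"
    unfolding x0_def y0_def using xy by (simp add: algebra_simps)
  have "x0 * (x0 * y0) = (x0 * x0) * y0" by (simp add: mult.assoc)
  then have "emb (- (e + c1 * c2) * c1 + (a1 + c1 * c1) * c2)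
      + emb (e + c1 * c2) * x + emb (- (a1 + c1 * c1)) * y = emb 0 + emb 0 * x + emb 0 * y"
    unfolding x0x0 x0y0 unfolding x0_def y0_def by (simp add: algebra_simps)
  from F_basis3_one_coeffs_eq[OF B this] have "a1 + c1 * c1 = 0" "e + c1 * c2 = 0"
    by (auto simp: add.commute neg_eq_iff_add_eq_0)
  then have sq0: "x0 * x0 = 0" and xy0: "x0 * y0 = 0"
    unfolding x0x0 x0y0 by (simp_all only: emb0)
  have "x0 = 0"
  proof (rule square_zero_eq_0[OF sq0])
    fix z
    obtain p q r where "z = emb p * 1 + emb q * x + emb r * y"
      using B unfolding F_basis3_def by blast
    then have "z = emb (p + q * c1 + r * c2) + emb q * x0 + emb r * y0"
      unfolding x0_def y0_def by (simp add: algebra_simps)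
    then have "x0 * z = emb (p + q * c1 + r * c2) * x0 + emb q * (x0 * x0) + emb r * (x0 * y0)"
      by (simp add: algebra_simps)
    then have "x0 * z = emb (p + q * c1 + r * c2) * x0"
      using sq0 xy0 by simp
    then show "\<exists>c. x0 * z = emb c * x0" by blast
  qed
  then have "emb 0 + emb 1 * x + emb 0 * y = emb c1 + emb 0 * x + emb 0 * y"
    unfolding x0_def by simp
  from F_basis3_one_coeffs_eq[OF B this] show False by simp
qed

lemma ex_not_in_F: "\<exists>y. \<forall>c. y \<noteq> emb c"
  using ex_non_quadratic by (metis add_0 emb0)

lemma emb_mult_eq_embD: "a \<noteq> 0 \<Longrightarrow> emb a * x = emb d \<Longrightarrow> x = emb (inverse a * d)"
  using emb_inverse_mult[of a] by (metis emb_mult mult.assoc mult_1)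

lemma eq_0_if_mult_in_F:
  assumes "\<And>x. \<exists>c. emb a * x = emb c"
  shows "a = 0"
proof (rule ccontr)
  assume "a \<noteq> 0"
  obtain y where y: "\<forall>c. y \<noteq> emb c" using ex_not_in_F by blast
  obtain c where "emb a * y = emb c" using assms by blast
  then show False using emb_mult_eq_embD[OF \<open>a \<noteq> 0\<close>] y by blast
qed

lemma additive_F_valued_eq_0:
  assumes g_in_F: "\<And>x. \<exists>c. g x = emb c"
    and g_add: "\<And>x y. g (x + y) = g x + g y"
    and H: "\<And>x. \<exists>c. g 1 * (tt x * x - x * x) - g x * x = emb c"
  shows "g x = 0"
proof -
  obtain r where r: "g 1 = emb r" using g_in_F by blast
  have "r = 0"
  proof (rule ccontr)
    assume "r \<noteq> 0"
    obtain y where y: "\<forall>a b. y * y \<noteq> emb a + emb b * y" using ex_non_quadratic by blast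
    obtain d where d: "g y = emb d" using g_in_F by blast
    obtain c where "g 1 * (tt y * y - y * y) - g y * y = emb c" using H by blast
    then have "emb r * (y * y) = emb (- c) + emb (r * T y - d) * y"
      using r d by (simp add: algebra_simps)
    moreover have "emb (inverse r) * (emb r * (y * y)) = y * y"
      using emb_inverse_mult[OF \<open>r \<noteq> 0\<close>] by (simp add: mult.assoc[symmetric])
    ultimately have "y * y = emb (inverse r * - c) + emb (inverse r * (r * T y - d)) * y"
      by (metis distrib_left emb_mult mult.assoc)
    then show False using y by blast
  qed
  then have mult_in_F: "\<exists>c. g z * z = emb c" for z
    using H[of z] r by (metis add.inverse_inverse emb0 emb_uminus minus_diff_eq mult_zero_left diff_zero)
  have not_in_F: "g z = 0" if z: "\<forall>c. z \<noteq> emb c" for z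
  proof (rule ccontr)
    obtain a where a: "g z = emb a" using g_in_F by blast
    obtain d where "g z * z = emb d" using mult_in_F by blast
    moreover assume "g z \<noteq> 0"
    ultimately have "z = emb (inverse a * d)" using emb_mult_eq_embD[of a z d] a by simp
    then show False using z by blast
  qed
  obtain y where y: "\<forall>c. y \<noteq> emb c" using ex_not_in_F by blast
  show "g x = 0"
  proof (cases "\<exists>c. x = emb c")
    case True
    then have "\<forall>d. x + y \<noteq> emb d" using y by (metis add_diff_cancel_left' emb_diff)
    then show ?thesis using not_in_F y g_add[of x y] by simp
  qed (use not_in_F in blast)
qed

end

locale reduced_twisted_comp = etale_cubic_alg emb for emb :: "'f::field \<Rightarrow> 'e::comm_ring_1" +
  fixes Q :: "'e \<times> 'e \<Rightarrow> 'e" and \<beta> :: "'e \<times> 'e \<Rightarrow> 'e \<times> 'e"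
  assumes twisted: "twisted_comp emb Q \<beta>" and reduced: "\<beta> (1, 0) = (0, 1)"
begin

abbreviation "B \<equiv> bQ Q"
abbreviation "P \<equiv> polar_map \<beta>"

lemmas twisted_conds = twisted[unfolded twisted_comp_def]

lemma Q_scale: "Q (psc a v) = a * a * Q v"
  by (simp only: twisted_conds)
lemma bQ_add_left: "B (padd u v) w = B u w + B v w"
  by (simp only: twisted_conds)
lemma bQ_scale_left: "B (psc a v) w = a * B v w"
  by (simp only: twisted_conds)
lemma bQ_nondeg: "(\<And>w. B v w = 0) \<Longrightarrow> v = (0, 0)"
  using twisted_conds by (elim conjE) blast
lemma polar_add_left: "P (padd u v) w = padd (P u w) (P v w)"
  by (simp only: twisted_conds)
lemma polar_scale_left: "P (psc (emb c) v) w = psc (emb c) (P v w)"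
  by (simp only: twisted_conds)
lemma beta_scale: "\<beta> (psc a v) = psc (ad a) (\<beta> v)"
  by (simp only: twisted_conds)
lemma Q_beta: "Q (\<beta> v) = ad (Q v)"
  by (simp only: twisted_conds)
lemma bQ_beta_in_F: "\<exists>c. B v (\<beta> v) = emb c"
  using twisted_conds by (elim conjE) (metis rangeE)

lemma padd_comm: "padd u v = padd v u" unfolding padd_def by (simp add: add.commute)
lemma psc_psc: "psc a (psc b v) = psc (a * b) v" unfolding psc_def by (simp add: mult.assoc)
lemma psc_one [simp]: "psc 1 v = v" unfolding psc_def by simp
lemma psc_add: "psc (a + b) v = padd (psc a v) (psc b v)"
  unfolding psc_def padd_def by (simp add: algebra_simps)
lemma pair_decomp: "(x, y) = padd (psc x (1, 0)) (psc y (0, 1))"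
  unfolding padd_def psc_def by simp

lemma bQ_sym: "B u w = B w u" unfolding bQ_def by (simp add: padd_comm)
lemma polar_sym: "P u w = P w u" unfolding polar_map_def by (simp add: padd_comm)
lemma bQ_add_right: "B w (padd u v) = B w u + B w v" using bQ_add_left bQ_sym by metis
lemma bQ_scale_right: "B w (psc a v) = a * B w v" using bQ_scale_left bQ_sym by metis
lemma polar_add_right: "P w (padd u v) = padd (P w u) (P w v)" using polar_add_left polar_sym by metis
lemma Q_add: "Q (padd u w) = Q u + Q w + B u w" unfolding bQ_def by simp
lemma beta_add: "\<beta> (padd u w) = padd (padd (\<beta> u) (\<beta> w)) (P u w)"
  unfolding polar_map_def padd_def by simp

definition q where "q = Q (1, 0)"
definition n where "n = B (1, 0) (0, 1)"
definition nc where "nc = N_C emb Q \<beta> (1, 0)"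

lemma n_eq_emb_nc: "n = emb nc"
proof -
  obtain c where c: "n = emb c" unfolding n_def using bQ_beta_in_F[of "(1,0)"] reduced by auto
  have "nc = c" unfolding nc_def N_C_def n_def[symmetric] reduced using c emb_inj by (simp add: the_equality)
  then show ?thesis using c by simp
qed

lemma Q_e2: "Q (0, 1) = ad q" unfolding q_def using Q_beta[of "(1,0)"] reduced by simp

lemma Q_formula: "Q (x, y) = q * x * x + n * x * y + ad q * y * y"
proof -
  have "B (psc x (1, 0)) (psc y (0, 1)) = x * y * n"
    unfolding bQ_scale_left bQ_scale_right n_def by (simp add: mult.assoc)
  then show ?thesis unfolding pair_decomp[of x y] Q_add Q_scale q_def[symmetric] Q_e2
    by (simp add: algebra_simps)
qed

lemma bQ_eq:
  "B v w = 2 * q * fst v * fst w + n * (fst v * snd w + snd v * fst w) + 2 * ad q * snd v * snd w"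
  unfolding bQ_def padd_def using Q_formula by (cases v, cases w) (simp add: algebra_simps)

lemma Q_add_scaled: "Q (padd u (psc e w)) = Q u + e * B u w + e^2 * Q w"
  unfolding Q_add Q_scale bQ_scale_right by (simp add: algebra_simps power2_eq_square)

lemma Q_expansion:
  "Q (padd (padd X (psc (e^2) Z)) (psc e Y))
     = Q X + e * B X Y + e^2 * (Q Y + B X Z) + e^3 * B Y Z + e^4 * Q Z"
  unfolding Q_add Q_scale bQ_add_left bQ_add_right bQ_scale_left bQ_scale_right
  by (simp add: algebra_simps power2_eq_square power3_eq_cube power4_eq_xxxx bQ_sym[of Z Y])

lemma bQ_expansion:
  "B (padd u (psc e w)) (padd (padd X (psc (e^2) Z)) (psc e Y)) =
     B u X + e * (B u Y + B w X) + e^2 * (B u Z + B w Y) + e^3 * B w Z"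
  unfolding bQ_add_left bQ_add_right bQ_scale_left bQ_scale_right
  by (simp add: algebra_simps power2_eq_square power3_eq_cube)

lemma beta_add_scaled:
  "\<beta> (padd u (psc (emb c) w)) = padd (padd (\<beta> u) (psc (emb c ^ 2) (\<beta> w))) (psc (emb c) (P u w))"
proof -
  have "P u (psc (emb c) w) = psc (emb c) (P u w)"
    using polar_scale_left[of c w u] polar_sym[of u "psc (emb c) w"] polar_sym[of w u] by simp
  then show ?thesis unfolding beta_add beta_scale adj_emb by simp
qed

lemma Q_beta_expansion:
  "Q (\<beta> (padd u (psc (emb c) w))) - ad (Q (padd u (psc (emb c) w))) =
    (Q (\<beta> u) - ad (Q u)) + emb c * (B (\<beta> u) (P u w) - cr (Q u) (B u w))
    + emb c ^ 2 * (Q (P u w) + B (\<beta> u) (\<beta> w) - ad (B u w) - cr (Q u) (Q w))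
    + emb c ^ 3 * (B (P u w) (\<beta> w) - cr (B u w) (Q w)) + emb c ^ 4 * (Q (\<beta> w) - ad (Q w))"
  unfolding beta_add_scaled Q_expansion unfolding Q_add_scaled adj_add_scaled by (simp add: algebra_simps)

lemma bQ_beta_polar: "B (\<beta> u) (P u w) = cr (Q u) (B u w)"
proof -
  let ?f = "\<lambda>c. Q (\<beta> (padd u (psc (emb c) w))) - ad (Q (padd u (psc (emb c) w)))"
  have "B (\<beta> u) (P u w) - cr (Q u) (B u w) = emb (inverse 12) * (8 * (?f 1 - ?f (-1)) - (?f 2 - ?f (-2)))"
    by (rule quartic_coeffs(1)[where f = ?f, OF Q_beta_expansion])
  then show ?thesis by (simp add: Q_beta)
qed

lemma Q_polar_plus_bQ_beta: "Q (P u w) + B (\<beta> u) (\<beta> w) = ad (B u w) + cr (Q u) (Q w)"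
proof -
  let ?f = "\<lambda>c. Q (\<beta> (padd u (psc (emb c) w))) - ad (Q (padd u (psc (emb c) w)))"
  have "Q (P u w) + B (\<beta> u) (\<beta> w) - ad (B u w) - cr (Q u) (Q w) =
     emb (inverse 24) * (16 * (?f 1 + ?f (-1)) - (?f 2 + ?f (-2)) - 30 * ?f 0)"
    by (rule quartic_coeffs(2)[where f = ?f, OF Q_beta_expansion])
  then show ?thesis by (simp add: Q_beta algebra_simps)
qed

lemma bQ_beta_expansion:
  "B (padd u (psc (emb c) w)) (\<beta> (padd u (psc (emb c) w))) =
    B u (\<beta> u) + emb c * (B u (P u w) + B w (\<beta> u)) + emb c ^ 2 * (B u (\<beta> w) + B w (P u w))
    + emb c ^ 3 * B w (\<beta> w) + emb c ^ 4 * 0"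
  unfolding beta_add_scaled bQ_expansion by simp

lemma bQ_polar_plus_bQ_beta_in_F: "\<exists>a. B u (P u w) + B w (\<beta> u) = emb a"
proof -
  let ?f = "\<lambda>c. B (padd u (psc (emb c) w)) (\<beta> (padd u (psc (emb c) w)))"
  obtain a1 a2 a3 a4 where "?f 1 = emb a1" "?f (-1) = emb a2" "?f 2 = emb a3" "?f (-2) = emb a4"
    using bQ_beta_in_F by metis
  moreover have "B u (P u w) + B w (\<beta> u) = emb (inverse 12) * (8 * (?f 1 - ?f (-1)) - (?f 2 - ?f (-2)))"
    by (rule quartic_coeffs(1)[where f = ?f, OF bQ_beta_expansion])
  ultimately have "B u (P u w) + B w (\<beta> u) = emb (inverse 12 * (8 * (a1 - a2) - (a3 - a4)))"
    by (simp only: emb_diff emb_mult emb_numeral)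
  then show ?thesis by blast
qed

lemma polar_scale_both: "P (psc a v) (psc a w) = psc (ad a) (P v w)"
proof -
  have h: "padd (psc a v) (psc a w) = psc a (padd v w)"
    unfolding padd_def psc_def by (simp add: algebra_simps)
  show ?thesis unfolding polar_map_def h beta_scale unfolding psc_def by (simp add: algebra_simps)
qed

lemma polar_mixed: "padd (P (psc a u) (psc b w)) (P (psc b u) (psc a w)) = psc (cr a b) (P u w)"
  using polar_scale_both[of "a + b" u w]
  unfolding psc_add polar_add_left polar_add_right adj_add polar_scale_both
  unfolding psc_def padd_def by (simp add: algebra_simps prod_eq_iff)

text \<open>The unknowns are \<open>K\<close>, \<open>C\<close> and \<open>\<beta>(e\<^sub>2) = (s, t)\<close>; they turn out to be
  \<open>K z = (q \<times> z, 0)\<close> and \<open>(s, t) = (n, -q)\<close>.\<close>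
definition K where "K z = P (1, 0) (psc z (0, 1))"
definition C where "C x y = P (psc x (1, 0)) (psc y (0, 1))"
definition s where "s = fst (\<beta> (0, 1))"
definition t where "t = snd (\<beta> (0, 1))"

abbreviation "k1 z \<equiv> fst (K z)"
abbreviation "k2 z \<equiv> snd (K z)"

lemma beta_e2: "\<beta> (0, 1) = (s, t)" unfolding s_def t_def by simp

lemma K_add: "K (z + z') = padd (K z) (K z')"
  unfolding K_def psc_add polar_add_right ..

lemma C_eq_K: "C x y = (fst (psc (tt x - x) (K y)) - k1 (x * y), snd (psc (tt x - x) (K y)) - k2 (x * y))"
proof -
  have "padd (P (psc x (1, 0)) (psc 1 (psc y (0, 1)))) (P (psc 1 (1, 0)) (psc x (psc y (0, 1))))
      = psc (cr x 1) (P (1, 0) (psc y (0, 1)))"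
    by (rule polar_mixed)
  then have "padd (C x y) (K (x * y)) = psc (tt x - x) (K y)"
    unfolding C_def K_def psc_one psc_psc cross_one by (simp add: mult.commute)
  then show ?thesis unfolding padd_def by (auto simp: prod_eq_iff eq_diff_eq)
qed

lemma C_one: "C x 1 = ((tt x - x) * k1 1 - k1 x, (tt x - x) * k2 1 - k2 x)"
  using C_eq_K[of x 1] by (simp add: psc_def)

lemma beta_decomp: "\<beta> (x, y) = padd (padd (0, ad x) (psc (ad y) (s, t))) (C x y)"
proof -
  have "\<beta> (psc x (1, 0)) = (0, ad x)"
    using beta_scale[of x "(1, 0)"] unfolding reduced psc_def by simp
  then show ?thesis unfolding C_def beta_e2[symmetric] by (subst pair_decomp) (simp only: beta_add beta_scale)
qed

lemma bQ_e2_K: "n * k1 z + 2 * ad q * k2 z = n * cr q z"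
proof -
  have "B (\<beta> (1, 0)) (P (1, 0) (psc z (0, 1))) = cr (Q (1, 0)) (B (1, 0) (psc z (0, 1)))"
    by (rule bQ_beta_polar)
  moreover have "cr q (n * z) = n * cr q z"
    unfolding n_eq_emb_nc using cross_scale_right by simp
  ultimately show ?thesis
    unfolding reduced K_def[symmetric] q_def[symmetric] bQ_eq by (simp add: psc_def algebra_simps)
qed

lemma linearized_N_C_e1: "\<exists>a. 2 * q * k1 z + n * k2 z + 2 * ad q * z = emb a"
  using bQ_polar_plus_bQ_beta_in_F[of "(1, 0)" "psc z (0, 1)"]
  unfolding reduced K_def[symmetric] bQ_eq by (simp add: psc_def algebra_simps)

lemma linearized_N_C_e2: "\<exists>a. n * fst (C x 1) + 2 * ad q * snd (C x 1) + x * (2 * q * s + n * t) = emb a"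
proof -
  have "P (0, 1) (psc x (1, 0)) = C x 1" unfolding C_def by (simp add: polar_sym)
  then show ?thesis using bQ_polar_plus_bQ_beta_in_F[of "(0, 1)" "psc x (1, 0)"]
    unfolding beta_e2 bQ_eq by (simp add: psc_def algebra_simps)
qed

lemma linearized_N_C_scaled_e1: "\<exists>a. x * (2 * q * fst (C x 1) + n * snd (C x 1)) + 2 * ad q * ad x = emb a"
proof -
  have "P (psc x (1, 0)) (0, 1) = C x 1" unfolding C_def by simp
  then show ?thesis using bQ_polar_plus_bQ_beta_in_F[of "psc x (1, 0)" "(0, 1)"]
    unfolding beta_scale reduced bQ_eq by (simp add: psc_def algebra_simps)
qed

lemma Q_polar_e1_e2: "Q (K 1) + n * s + 2 * ad q * t = ad n + cr q (ad q)"
proof -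
  have "P (1, 0) (0, 1) = K 1" unfolding K_def by simp
  then show ?thesis using Q_polar_plus_bQ_beta[of "(1, 0)" "(0, 1)"]
    unfolding reduced beta_e2 n_def[symmetric] q_def[symmetric] Q_e2 bQ_eq by (simp add: add.assoc)
qed

lemma disc_neq_0: "4 * N q - nc ^ 2 \<noteq> 0"
proof
  assume "4 * N q - nc ^ 2 = 0"
  then have "emb (4 * N q - nc ^ 2) = 0" by simp
  then have D: "4 * (q * ad q) = n * n"
    unfolding mult_adj n_eq_emb_nc by (simp add: power2_eq_square)
  have "(2 * ad q, - n) = (0, 0)"
  proof (rule bQ_nondeg)
    fix w show "B (2 * ad q, - n) w = 0" unfolding bQ_eq using D by (simp add: algebra_simps)
  qed
  then have n0: "n = 0" by simp
  have "(n, - 2 * q) = (0, 0)"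
  proof (rule bQ_nondeg)
    fix w show "B (n, - 2 * q) w = 0" unfolding bQ_eq using D n0 by (simp add: algebra_simps)
  qed
  then have q0: "2 * q = 0" by simp
  have "((1::'e), (0::'e)) = (0, 0)"
  proof (rule bQ_nondeg)
    fix w show "B (1, 0) w = 0" unfolding bQ_eq using q0 n0 by (simp add: algebra_simps)
  qed
  then show False using one_neq_zero_E by simp
qed

lemma disc_system_unique:
  assumes h1: "2 * q * a + n * b = 0" and h2: "n * a + 2 * ad q * b = 0"
  shows "a = 0 \<and> b = 0"
proof -
  have "4 * (q * ad q) - n * n = emb (4 * N q - nc ^ 2)"
    unfolding mult_adj n_eq_emb_nc by (simp add: power2_eq_square)
  then have d: "emb (inverse (4 * N q - nc ^ 2)) * (4 * (q * ad q) - n * n) = 1"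
    using emb_inverse_mult[OF disc_neq_0] by simp
  have "(4 * (q * ad q) - n * n) * a = 2 * ad q * (2 * q * a + n * b) - n * (n * a + 2 * ad q * b)"
    "(4 * (q * ad q) - n * n) * b = 2 * q * (n * a + 2 * ad q * b) - n * (2 * q * a + n * b)"
    by (simp_all add: algebra_simps)
  then have "(4 * (q * ad q) - n * n) * a = 0" "(4 * (q * ad q) - n * n) * b = 0"
    using h1 h2 by simp_all
  moreover have "a = emb (inverse (4 * N q - nc ^ 2)) * ((4 * (q * ad q) - n * n) * a)"
    "b = emb (inverse (4 * N q - nc ^ 2)) * ((4 * (q * ad q) - n * n) * b)"
    using d by (simp_all add: mult.assoc[symmetric])
  ultimately show ?thesis by simp
qed

text \<open>The defect is additive and \<open>F\<close>-valued, so it vanishes by \<open>additive_F_valued_eq_0\<close>;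
  together with \<open>bQ_e2_K\<close> this is a system with determinant \<open>4 N(q) - n\<^sup>2\<close> for \<open>K z\<close>.\<close>
definition defect where "defect z = 2 * q * (k1 z - cr q z) + n * k2 z"

lemma defect_in_F: "\<exists>c. defect z = emb c"
proof -
  obtain a where a: "2 * q * k1 z + n * k2 z + 2 * ad q * z = emb a" using linearized_N_C_e1 by blast
  have "defect z = emb (a - 2 * (T (q * q * z) - T q * T (q * z) + S q * T z))"
    unfolding defect_def
    by (rule eq_by_lincomb2[where ka=1 and kb="-2", OF a adj_mult_plus_cross[of q z]]) (simp add: algebra_simps)
  then show ?thesis by blast
qed

lemma defect_add: "defect (x + y) = defect x + defect y"
  unfolding defect_def K_add cross_add_right by (simp add: padd_def algebra_simps)

lemma defect_quadratic: "\<exists>c. defect 1 * (tt x * x - x * x) - defect x * x = emb c"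
proof -
  obtain a where "x * (2 * q * fst (C x 1) + n * snd (C x 1)) + 2 * ad q * ad x = emb a"
    using linearized_N_C_scaled_e1 by blast
  then have a: "x * (2 * q * ((tt x - x) * k1 1 - k1 x) + n * ((tt x - x) * k2 1 - k2 x)) + 2 * ad q * ad x = emb a"
    unfolding C_one by simp
  have "defect 1 * (tt x * x - x * x) - defect x * x
      = emb (a - 2 * (T (q * q * ad x) - T q * T (q * ad x) + S q * S x))"
    unfolding defect_def
    by (rule eq_by_lincomb4[where ka=1 and kb="-2" and kc="-2 * x * (tt x - x) * q" and kd="-2 * x * (tt x - x)",
          OF a adj_mult_adj[of q x] cross_one[of q] adj_eq[of q]]) (simp add: algebra_simps)
  then show ?thesis by blast
qed

lemma K_eq: "K z = (cr q z, 0)"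
proof -
  have "2 * q * (k1 z - cr q z) + n * k2 z = 0"
    using additive_F_valued_eq_0[OF defect_in_F defect_add defect_quadratic] unfolding defect_def .
  moreover have "n * (k1 z - cr q z) + 2 * ad q * k2 z = 0" using bQ_e2_K[of z] by (simp add: algebra_simps)
  ultimately have "k1 z - cr q z = 0 \<and> k2 z = 0" by (rule disc_system_unique)
  then show ?thesis by (simp add: prod_eq_iff)
qed

lemma beta_e2_first_relation: "2 * q * s + n * t = n * q"
proof -
  have F: "\<exists>c. (2 * q * s + n * t - n * q) * x = emb c" for x
  proof -
    obtain a where "n * fst (C x 1) + 2 * ad q * snd (C x 1) + x * (2 * q * s + n * t) = emb a"
      using linearized_N_C_e2 by blast
    then have a: "n * ((tt x - x) * cr q 1 - cr q x) + x * (2 * q * s + n * t) = emb a"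
      unfolding C_one K_eq by simp
    have "(2 * q * s + n * t - n * q) * x = emb (a - nc * T (q * x))"
      by (rule eq_by_lincomb3[where ka=1 and kb="-n" and kc="- n * (tt x - x)",
            OF a trace_sub_mult_trace_sub[of x q] cross_one[of q]]) (simp add: n_eq_emb_nc algebra_simps)
    then show ?thesis by blast
  qed
  obtain a where a: "2 * q * s + n * t - n * q = emb a" using F[of 1] by auto
  have "a = 0" by (rule eq_0_if_mult_in_F) (use F a in \<open>auto simp: mult.commute\<close>)
  then show ?thesis using a by simp
qed

lemma beta_e2_second_relation: "n * s + 2 * ad q * t = n * n - 2 * nn q"
proof -
  have qk: "Q (K 1) = q * (tt q - q) * (tt q - q)" unfolding K_eq Q_formula cross_one by simp
  have an: "ad n = n * n" unfolding n_eq_emb_nc adj_emb by (simp add: power2_eq_square)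
  show ?thesis
    by (rule eq_by_lincomb2[where ka=1 and kb="-1", OF Q_polar_e1_e2 cross_adj_self[of q]])
      (simp add: qk an algebra_simps power2_eq_square)
qed

lemma beta_e2_eq: "s = n" "t = - q"
proof -
  have "2 * q * (s - n) + n * (t + q) = 0" using beta_e2_first_relation by (simp add: algebra_simps)
  moreover have "n * (s - n) + 2 * ad q * (t + q) = 0"
    using beta_e2_second_relation mult_adj[of q] by (simp add: algebra_simps)
  ultimately have "s - n = 0 \<and> t + q = 0" by (rule disc_system_unique)
  then show "s = n" "t = - q" by (simp_all add: eq_neg_iff_add_eq_0)
qed

lemma beta_formula: "\<beta> (x, y) = (n * ad y + cr (q * x) y, ad x - q * ad y)"
proof -
  have "C x y = (cr (q * x) y, 0)"
    using C_eq_K[of x y] unfolding K_eq cross_mult[symmetric] by (simp add: psc_def)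
  then show ?thesis unfolding beta_decomp[of x y] beta_e2_eq
    by (simp add: padd_def psc_def algebra_simps)
qed

lemma Q_eq_phi_Q: "Q = phi_Q emb (1, 0, - q, - nc)"
proof
  fix v :: "'e \<times> 'e"
  show "Q v = phi_Q emb (1, 0, - q, - nc) v"
    using adj_uminus[of q] by (cases v) (simp add: Q_formula phi_Q_def n_eq_emb_nc power2_eq_square algebra_simps)
qed

lemma beta_eq_phi_beta: "\<beta> = phi_beta emb (1, 0, - q, - nc)"
proof
  fix v :: "'e \<times> 'e"
  show "\<beta> v = phi_beta emb (1, 0, - q, - nc) v"
    using cross_uminus[of "q * fst v" "snd v"]
    by (cases v) (simp add: beta_formula phi_beta_def n_eq_emb_nc algebra_simps)
qed

lemma Delta_E_eq_Delta_C: "Delta_E emb (1, 0, - q, - nc) = Delta_C emb Q \<beta> (1, 0)"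
  unfolding Delta_E_def Delta_C_def nc_def q_def using N_uminus[of "Q (1, 0)"] by simp

end


theorem proposition10p2:
  fixes emb :: "'f::field \<Rightarrow> 'e::comm_ring_1"
    and Q :: "'e \<times> 'e \<Rightarrow> 'e"
    and \<beta> :: "'e \<times> 'e \<Rightarrow> 'e \<times> 'e"
  assumes "(2::'f) \<noteq> 0" and "(3::'f) \<noteq> 0"
    and "etale_cubic emb"
    and "twisted_comp emb Q \<beta>"
    and "\<beta> (1, 0) = (0, 1)"
  shows "(Q, \<beta>) = phi_tilde emb (1, 0, - Q (1, 0), - N_C emb Q \<beta> (1, 0))
    \<and> Delta_E emb (1, 0, - Q (1, 0), - N_C emb Q \<beta> (1, 0)) = Delta_C emb Q \<beta> (1, 0)"
proof -
  interpret reduced_twisted_comp emb Q \<beta>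
    using assms by unfold_locales (auto simp: etale_cubic_def)
  show ?thesis
    using Q_eq_phi_Q beta_eq_phi_beta Delta_E_eq_Delta_C
    unfolding phi_tilde_def q_def nc_def by simp
qed

end
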